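(* Let $x_1\le x_2\le\dots\le x_n$ and $y_1\le y_2\le\dots\le y_n$ be real numbers. Set $\mu=\frac1n\sum_{i=1}^n\delta_{x_i}$ and $\nu=\frac1n\sum_{i=1}^n\delta_{y_i}$, and let $\theta$ be a strictly convex cost function. The following are equivalent: (i) the map $i\mapsto x_i-y_i$ is non-decreasing; (ii) $\overline{\mathcal{T}}_\theta(\nu|\mu)=\mathcal{T}_\theta(\nu,\mu)$.
   Context: A cost function is an even convex function $\theta:\mathbb{R}\to[0,\infty)$ with $\theta(0)=0$. The weak transport cost is $$\overline{\mathcal{T}}_\theta(\nu|\mu)=\inf_\pi\int\theta\big(|x-\textstyle\int y\,p(x,dy)|\big)\,\mu(dx),$$ with the infimum over couplings $\pi(dx\,dy)=\mu(dx)p(x,dy)$ with marginals $\mu$ and $\nu$. The classical transport cost is $\mathcal{T}_\theta(\nu,\mu)=\inf_\pi\int\theta(|x-y|)\,d\pi$. *)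

theory Defs
  imports "HOL-Analysis.Analysis" "HOL-Probability.Probability"
begin

definition cost_function :: "(real \<Rightarrow> real) \<Rightarrow> bool" where
  "cost_function \<theta> \<longleftrightarrow> convex_on UNIV \<theta> \<and> (\<forall>x. \<theta> (- x) = \<theta> x)
     \<and> (\<forall>x. 0 \<le> \<theta> x) \<and> \<theta> 0 = 0"

definition strictly_convex :: "(real \<Rightarrow> real) \<Rightarrow> bool" where
  "strictly_convex \<theta> \<longleftrightarrow> (\<forall>x y t. x \<noteq> y \<longrightarrow> 0 < t \<longrightarrow> t < 1 \<longrightarrow>
      \<theta> ((1 - t) * x + t * y) < (1 - t) * \<theta> x + t * \<theta> y)"

definition empirical :: "nat \<Rightarrow> (nat \<Rightarrow> real) \<Rightarrow> real pmf" where
  "empirical n x = map_pmf x (pmf_of_set {..<n})"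

definition couplings :: "real pmf \<Rightarrow> real pmf \<Rightarrow> (real \<times> real) pmf set" where
  "couplings \<mu> \<nu> = {\<pi>. map_pmf fst \<pi> = \<mu> \<and> map_pmf snd \<pi> = \<nu>}"

text \<open>Barycenter int y p(x,dy) of the disintegration kernel of pi at x
  (pi(dx dy) = mu(dx) p(x,dy), mu the first marginal).\<close>
definition kernel_bary :: "(real \<times> real) pmf \<Rightarrow> real \<Rightarrow> real" where
  "kernel_bary \<pi> x =
     measure_pmf.expectation \<pi> (\<lambda>(a, b). if a = x then b else 0) / pmf (map_pmf fst \<pi>) x"

definition weak_cost :: "(real \<Rightarrow> real) \<Rightarrow> real pmf \<Rightarrow> real pmf \<Rightarrow> real" where
  "weak_cost \<theta> \<nu> \<mu> =
     Inf ((\<lambda>\<pi>. measure_pmf.expectation \<mu> (\<lambda>x. \<theta> \<bar>x - kernel_bary \<pi> x\<bar>)) ` couplings \<mu> \<nu>)"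

definition transport_cost :: "(real \<Rightarrow> real) \<Rightarrow> real pmf \<Rightarrow> real pmf \<Rightarrow> real" where
  "transport_cost \<theta> \<nu> \<mu> =
     Inf ((\<lambda>\<pi>. measure_pmf.expectation \<pi> (\<lambda>(x, y). \<theta> \<bar>x - y\<bar>)) ` couplings \<mu> \<nu>)"

end

theory Submission
  imports Defs
begin

text \<open>For convex \<open>\<theta>\<close> the cost \<open>\<theta>(a - b)\<close> is a Monge cost, so for sorted points the diagonal
  coupling is optimal: Kantorovich potentials obtained by telescoping along the diagonal certify that
  the classical cost is \<open>(1/n) \<Sum>\<^sub>k \<theta>(x\<^sub>k - y\<^sub>k)\<close>. By Jensen the weak cost is at most this sum.
  If \<open>d\<^sub>k = x\<^sub>k - y\<^sub>k\<close> is non-decreasing, so are the subgradients \<open>g\<^sub>k\<close> of \<open>\<theta>\<close> at \<open>d\<^sub>k\<close>, hence the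
  affine minorants \<open>\<theta>(d\<^sub>k) + g\<^sub>k (x\<^sub>k - b - d\<^sub>k)\<close> of the weak integrand again form a Monge cost in
  \<open>b\<close>; being affine in \<open>b\<close> they commute with taking barycentres, and the same diagonal argument
  bounds the weak cost from below. If instead \<open>d\<^sub>i > d\<^sub>j\<close> for some \<open>i < j\<close>, sending part of the
  mass of \<open>x\<^sub>i\<close> to \<open>y\<^sub>j\<close> and of \<open>x\<^sub>j\<close> to \<open>y\<^sub>i\<close> moves both barycentric displacements to
  \<open>(d\<^sub>i + d\<^sub>j)/2\<close>, which strict convexity makes strictly cheaper.\<close>

lemma convex_on_real_subgradient:
  fixes f :: "real \<Rightarrow> real"
  assumes "convex_on UNIV f"
  shows "\<exists>g. \<forall>t. f m + g * (t - m) \<le> f t"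
proof -
  define S where "S = {(f m - f s) / (m - s) | s. s < m}"
  have S_ne: "S \<noteq> {}" unfolding S_def by (auto intro: exI[of _ "m - 1"])
  have S_le_slope: "v \<le> (f t - f m) / (t - m)" if "v \<in> S" "m < t" for v t
  proof -
    obtain s where s: "s < m" "v = (f m - f s) / (m - s)" using \<open>v \<in> S\<close> unfolding S_def by auto
    have "(f s - f m) / (s - m) \<le> (f m - f t) / (m - t)"
      using convex_on_slope_le[OF assms, of s t m] s \<open>m < t\<close> by auto
    moreover have "(a - b) / (c - d) = (b - a) / (d - c)" for a b c d :: real
      by (metis minus_diff_eq minus_divide_divide)
    ultimately show ?thesis
      using s by metis
  qed
  have bdd: "bdd_above S"
    using S_le_slope[of _ "m + 1"] by (intro bdd_aboveI[where M = "f (m + 1) - f m"]) auto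
  have "f m + Sup S * (t - m) \<le> f t" for t
  proof (cases t m rule: linorder_cases)
    case greater
    have "Sup S \<le> (f t - f m) / (t - m)"
      by (rule cSup_least[OF S_ne]) (use S_le_slope greater in auto)
    then show ?thesis using greater by (simp add: pos_le_divide_eq)
  next
    case less
    have "(f m - f t) / (m - t) \<le> Sup S"
      by (rule cSup_upper[OF _ bdd]) (use less in \<open>auto simp: S_def\<close>)
    then show ?thesis using less by (simp add: pos_divide_le_eq algebra_simps)
  qed simp
  then show ?thesis by blast
qed

definition subgradient :: "(real \<Rightarrow> real) \<Rightarrow> real \<Rightarrow> real" where
  "subgradient f m = (SOME g. \<forall>t. f m + g * (t - m) \<le> f t)"

lemma subgradient_le:
  assumes "convex_on UNIV f"
  shows "f m + subgradient f m * (t - m) \<le> f t"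
  using someI_ex[OF convex_on_real_subgradient[OF assms, of m]]
  unfolding subgradient_def by blast

lemma subgradient_mono:
  assumes "convex_on UNIV f" and "u \<le> v"
  shows "subgradient f u \<le> subgradient f v"
proof (cases "u = v")
  case False
  with assms have "u < v" by simp
  have "f u + subgradient f u * (v - u) \<le> f v" "f v + subgradient f v * (u - v) \<le> f u"
    using subgradient_le[OF assms(1)] by blast+
  then have "subgradient f u * (v - u) \<le> subgradient f v * (v - u)" by (simp add: algebra_simps)
  then show ?thesis using \<open>u < v\<close> by simp
qed simp

lemma convex_on_Monge:
  fixes f :: "real \<Rightarrow> real"
  assumes "convex_on UNIV f" and "x1 \<le> x2" "y1 \<le> y2"
  shows "f (x1 - y1) + f (x2 - y2) \<le> f (x1 - y2) + f (x2 - y1)"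
proof -
  let ?g = "subgradient f"
  have tangents:
    "f (x1 - y1) + ?g (x1 - y1) * ((x2 - y1) - (x1 - y1)) \<le> f (x2 - y1)"
    "f (x1 - y1) + ?g (x1 - y1) * ((x1 - y2) - (x1 - y1)) \<le> f (x1 - y2)"
    "f (x2 - y2) + ?g (x2 - y2) * ((x1 - y2) - (x2 - y2)) \<le> f (x1 - y2)"
    "f (x2 - y2) + ?g (x2 - y2) * ((x2 - y1) - (x2 - y2)) \<le> f (x2 - y1)"
    using subgradient_le[OF assms(1)] by blast+
  show ?thesis
  proof (cases "?g (x2 - y2) \<le> ?g (x1 - y1)")
    case True
    then have "0 \<le> (?g (x1 - y1) - ?g (x2 - y2)) * (x2 - x1)" using assms by simp
    then show ?thesis using tangents(1,3) by (simp add: algebra_simps)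
  next
    case False
    then have "0 \<le> (?g (x2 - y2) - ?g (x1 - y1)) * (y2 - y1)" using assms by simp
    then show ?thesis using tangents(2,4) by (simp add: algebra_simps)
  qed
qed

definition Monge_potential :: "(nat \<Rightarrow> nat \<Rightarrow> real) \<Rightarrow> nat \<Rightarrow> real" where
  "Monge_potential c k = (\<Sum>m<k. c m m - c m (Suc m))"

lemma Monge_potential_le:
  fixes c :: "nat \<Rightarrow> nat \<Rightarrow> real"
  assumes Monge: "\<And>j j' k k'. j \<le> j' \<Longrightarrow> j' < n \<Longrightarrow> k \<le> k' \<Longrightarrow> k' < n \<Longrightarrow>
      c j k + c j' k' \<le> c j k' + c j' k"
    and "j < n" "k < n"
  shows "Monge_potential c j + c j j - Monge_potential c k \<le> c j k"
proof (cases "j \<le> k")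
  case True
  from this \<open>k < n\<close> show ?thesis
  proof (induction k rule: dec_induct)
    case (step k)
    have "c j k + c k (Suc k) \<le> c j (Suc k) + c k k"
      using Monge[of j k k "Suc k"] step by simp
    with step show ?case by (simp add: Monge_potential_def)
  qed simp
next
  case False
  then have "k \<le> j" by simp
  from this \<open>j < n\<close> show ?thesis
  proof (induction j rule: dec_induct)
    case (step j)
    have "c j k + c (Suc j) (Suc j) \<le> c j (Suc j) + c (Suc j) k"
      using Monge[of j "Suc j" k "Suc j"] step by simp
    with step show ?case by (simp add: Monge_potential_def)
  qed simp
qed

lemma set_pmf_empirical:
  assumes "0 < n"
  shows "set_pmf (empirical n x) = x ` {..<n}"
  using assms by (subst empirical_def, subst set_map_pmf, subst set_pmf_of_set) auto

lemma integral_empirical: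
  assumes "0 < n"
  shows "measure_pmf.expectation (empirical n x) f = (\<Sum>k<n. f (x k)) / n"
  using assms by (subst empirical_def, subst integral_map_pmf, subst integral_pmf_of_set) auto

lemma set_pmf_coupling_empirical:
  assumes "\<pi> \<in> couplings (empirical n x) (empirical n y)" and "0 < n"
  shows "set_pmf \<pi> \<subseteq> x ` {..<n} \<times> y ` {..<n}"
proof -
  have "fst ` set_pmf \<pi> = x ` {..<n}" "snd ` set_pmf \<pi> = y ` {..<n}"
    using assms by (auto simp flip: set_map_pmf simp: couplings_def set_pmf_empirical)
  then show ?thesis by (metis mem_Times_iff image_eqI subsetI)
qed

lemma finite_set_pmf_coupling_empirical:
  assumes "\<pi> \<in> couplings (empirical n x) (empirical n y)" and "0 < n"
  shows "finite (set_pmf \<pi>)"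
  using set_pmf_coupling_empirical[OF assms] by (rule finite_subset) simp

lemma coupling_empirical_dual_bound:
  fixes c :: "real \<Rightarrow> real \<Rightarrow> real" and \<phi> \<psi> :: "nat \<Rightarrow> real"
  assumes \<pi>: "\<pi> \<in> couplings (empirical n x) (empirical n y)" and "0 < n"
    and dual: "\<And>j k. j < n \<Longrightarrow> k < n \<Longrightarrow> \<phi> j - \<psi> k \<le> c (x j) (y k)"
    and tight: "\<And>k. k < n \<Longrightarrow> \<phi> k - \<psi> k = c (x k) (y k)"
  shows "(\<Sum>k<n. c (x k) (y k)) / n \<le> measure_pmf.expectation \<pi> (\<lambda>(a, b). c a b)"
proof -
  \<comment> \<open>By tightness, \<open>\<phi>\<close> and \<open>\<psi>\<close> only depend on the points \<open>x j\<close> and \<open>y k\<close>, not on the indices.\<close>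
  define \<Phi> where "\<Phi> a = \<phi> (SOME j. j < n \<and> x j = a)" for a
  define \<Psi> where "\<Psi> b = \<psi> (SOME k. k < n \<and> y k = b)" for b
  have \<Phi>: "\<Phi> (x j) = \<phi> j" if "j < n" for j
  proof -
    define j' where "j' = (SOME j'. j' < n \<and> x j' = x j)"
    have j': "j' < n" "x j' = x j"
      using someI[of "\<lambda>j'. j' < n \<and> x j' = x j" j] that unfolding j'_def by auto
    show ?thesis using dual[of j' j] dual[of j j'] tight[of j] tight[of j'] j' that by (simp add: \<Phi>_def flip: j'_def)
  qed
  have \<Psi>: "\<Psi> (y k) = \<psi> k" if "k < n" for k
  proof -
    define k' where "k' = (SOME k'. k' < n \<and> y k' = y k)"
    have k': "k' < n" "y k' = y k"
      using someI[of "\<lambda>k'. k' < n \<and> y k' = y k" k] that unfolding k'_def by auto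
    show ?thesis using dual[of k k'] dual[of k' k] tight[of k] tight[of k'] k' that by (simp add: \<Psi>_def flip: k'_def)
  qed
  have marginals: "map_pmf fst \<pi> = empirical n x" "map_pmf snd \<pi> = empirical n y"
    using \<pi> by (auto simp: couplings_def)
  have int: "integrable (measure_pmf \<pi>) f" for f :: "real \<times> real \<Rightarrow> real"
    using finite_set_pmf_coupling_empirical[OF \<pi> \<open>0 < n\<close>] by (rule integrable_measure_pmf_finite)
  have "(\<Sum>k<n. c (x k) (y k)) = (\<Sum>k<n. \<Phi> (x k) - \<Psi> (y k))"
    by (rule sum.cong) (simp_all add: \<Phi> \<Psi> tight)
  then have "(\<Sum>k<n. c (x k) (y k)) / n = (\<Sum>k<n. \<Phi> (x k)) / n - (\<Sum>k<n. \<Psi> (y k)) / n"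
    by (simp add: sum_subtractf diff_divide_distrib)
  also have "\<dots> = measure_pmf.expectation (empirical n x) \<Phi> - measure_pmf.expectation (empirical n y) \<Psi>"
    using \<open>0 < n\<close> by (simp add: integral_empirical)
  also have "\<dots> = measure_pmf.expectation \<pi> (\<lambda>p. \<Phi> (fst p) - \<Psi> (snd p))"
    by (simp add: int flip: marginals)
  also have "\<dots> \<le> measure_pmf.expectation \<pi> (\<lambda>(a, b). c a b)"
  proof (rule integral_mono_AE[OF int int], unfold AE_measure_pmf_iff, intro ballI)
    fix p assume "p \<in> set_pmf \<pi>"
    then obtain j k where "j < n" "k < n" "p = (x j, y k)"
      using set_pmf_coupling_empirical[OF \<pi> \<open>0 < n\<close>] by blast
    then show "\<Phi> (fst p) - \<Psi> (snd p) \<le> (case p of (a, b) \<Rightarrow> c a b)"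
      using dual[of j k] by (simp add: \<Phi> \<Psi>)
  qed
  finally show ?thesis .
qed

lemma coupling_empirical_Monge_bound:
  fixes c :: "real \<Rightarrow> real \<Rightarrow> real"
  assumes "\<pi> \<in> couplings (empirical n x) (empirical n y)" and "0 < n"
    and "\<And>j j' k k'. j \<le> j' \<Longrightarrow> j' < n \<Longrightarrow> k \<le> k' \<Longrightarrow> k' < n \<Longrightarrow>
      c (x j) (y k) + c (x j') (y k') \<le> c (x j) (y k') + c (x j') (y k)"
  shows "(\<Sum>k<n. c (x k) (y k)) / n \<le> measure_pmf.expectation \<pi> (\<lambda>(a, b). c a b)"
proof -
  define \<psi> where "\<psi> = Monge_potential (\<lambda>j k. c (x j) (y k))"
  show ?thesis
  proof (rule coupling_empirical_dual_bound[OF assms(1,2)])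
    show "\<psi> j + c (x j) (y j) - \<psi> k \<le> c (x j) (y k)" if "j < n" "k < n" for j k
      unfolding \<psi>_def by (rule Monge_potential_le) (use assms(3) that in auto)
  qed simp
qed

lemma integral_mult_kernel_bary:
  fixes \<pi> :: "(real \<times> real) pmf" and \<beta> :: "real \<Rightarrow> real"
  assumes fin: "finite (set_pmf \<pi>)"
  shows "measure_pmf.expectation (map_pmf fst \<pi>) (\<lambda>a. \<beta> a * kernel_bary \<pi> a)
       = measure_pmf.expectation \<pi> (\<lambda>p. \<beta> (fst p) * snd p)"
proof -
  define A where "A = fst ` set_pmf \<pi>"
  define N where "N a = measure_pmf.expectation \<pi> (\<lambda>(a', b). if a' = a then b else 0)" for a
  have "finite A" using fin by (simp add: A_def)
  have "measure_pmf.expectation (map_pmf fst \<pi>) (\<lambda>a. \<beta> a * kernel_bary \<pi> a)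
      = (\<Sum>a\<in>A. \<beta> a * kernel_bary \<pi> a * pmf (map_pmf fst \<pi>) a)"
    by (rule integral_measure_pmf_real) (use fin in \<open>auto simp: A_def\<close>)
  also have "\<dots> = (\<Sum>a\<in>A. \<beta> a * N a)"
  proof (rule sum.cong[OF refl])
    fix a assume "a \<in> A"
    then have "0 < pmf (map_pmf fst \<pi>) a" by (simp add: A_def pmf_positive)
    then show "\<beta> a * kernel_bary \<pi> a * pmf (map_pmf fst \<pi>) a = \<beta> a * N a"
      by (simp add: kernel_bary_def N_def)
  qed
  also have "\<dots> = measure_pmf.expectation \<pi> (\<lambda>p. \<Sum>a\<in>A. \<beta> a * (if fst p = a then snd p else 0))"
    by (simp add: N_def integrable_measure_pmf_finite[OF fin] case_prod_unfold)
  also have "\<dots> = measure_pmf.expectation \<pi> (\<lambda>p. \<beta> (fst p) * snd p)"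
  proof (rule integral_cong_AE, unfold AE_measure_pmf_iff)
    show "\<forall>p\<in>set_pmf \<pi>. (\<Sum>a\<in>A. \<beta> a * (if fst p = a then snd p else 0)) = \<beta> (fst p) * snd p"
      using \<open>finite A\<close> by (auto simp: A_def if_distrib sum.delta' cong: if_cong)
  qed simp_all
  finally show ?thesis .
qed

lemma affine_minorant_le_integral_kernel_bary:
  fixes \<pi> :: "(real \<times> real) pmf" and \<alpha> \<beta> :: "real \<Rightarrow> real" and h :: "real \<Rightarrow> real \<Rightarrow> real"
  assumes fin: "finite (set_pmf \<pi>)"
    and minorant: "\<And>a z. a \<in> set_pmf (map_pmf fst \<pi>) \<Longrightarrow> \<alpha> a - \<beta> a * z \<le> h a z"
  shows "measure_pmf.expectation \<pi> (\<lambda>p. \<alpha> (fst p) - \<beta> (fst p) * snd p)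
       \<le> measure_pmf.expectation (map_pmf fst \<pi>) (\<lambda>a. h a (kernel_bary \<pi> a))"
proof -
  have fin_fst: "finite (set_pmf (map_pmf fst \<pi>))" using fin by simp
  note int = integrable_measure_pmf_finite[OF fin] integrable_measure_pmf_finite[OF fin_fst]
  have "measure_pmf.expectation \<pi> (\<lambda>p. \<alpha> (fst p) - \<beta> (fst p) * snd p)
      = measure_pmf.expectation (map_pmf fst \<pi>) \<alpha>
        - measure_pmf.expectation \<pi> (\<lambda>p. \<beta> (fst p) * snd p)"
    by (simp add: int)
  also have "\<dots> = measure_pmf.expectation (map_pmf fst \<pi>) \<alpha>
        - measure_pmf.expectation (map_pmf fst \<pi>) (\<lambda>a. \<beta> a * kernel_bary \<pi> a)"
    by (simp only: integral_mult_kernel_bary[OF fin])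
  also have "\<dots> = measure_pmf.expectation (map_pmf fst \<pi>) (\<lambda>a. \<alpha> a - \<beta> a * kernel_bary \<pi> a)"
    by (simp add: int)
  also have "\<dots> \<le> measure_pmf.expectation (map_pmf fst \<pi>) (\<lambda>a. h a (kernel_bary \<pi> a))"
    by (rule integral_mono_AE) (use int minorant in \<open>auto simp: AE_measure_pmf_iff\<close>)
  finally show ?thesis .
qed

lemma integral_convex_kernel_bary_le:
  fixes f :: "real \<Rightarrow> real" and \<pi> :: "(real \<times> real) pmf" and P :: "'a pmf" and X M :: "'a \<Rightarrow> real"
  assumes f: "convex_on UNIV f" and fin: "finite (set_pmf \<pi>)" "finite (set_pmf P)"
    and fst_\<pi>: "map_pmf fst \<pi> = map_pmf X P"
    and mean: "\<And>\<beta>. measure_pmf.expectation \<pi> (\<lambda>p. \<beta> (fst p) * snd p)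
                    = measure_pmf.expectation P (\<lambda>\<omega>. \<beta> (X \<omega>) * M \<omega>)"
  shows "measure_pmf.expectation (map_pmf fst \<pi>) (\<lambda>a. f (a - kernel_bary \<pi> a))
       \<le> measure_pmf.expectation P (\<lambda>\<omega>. f (X \<omega> - M \<omega>))"
proof -
  define z where "z = kernel_bary \<pi>"
  define \<beta> where "\<beta> a = subgradient f (a - z a)" for a
  note int = integrable_measure_pmf_finite[OF fin(2)]
  have "measure_pmf.expectation P (\<lambda>\<omega>. \<beta> (X \<omega>) * z (X \<omega>))
      = measure_pmf.expectation (map_pmf fst \<pi>) (\<lambda>a. \<beta> a * z a)"
    by (simp add: fst_\<pi>)
  also have "\<dots> = measure_pmf.expectation P (\<lambda>\<omega>. \<beta> (X \<omega>) * M \<omega>)"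
    unfolding z_def integral_mult_kernel_bary[OF fin(1)] by (rule mean)
  finally have "measure_pmf.expectation (map_pmf fst \<pi>) (\<lambda>a. f (a - z a))
      = measure_pmf.expectation P (\<lambda>\<omega>. f (X \<omega> - z (X \<omega>)) + \<beta> (X \<omega>) * (z (X \<omega>) - M \<omega>))"
    by (simp add: fst_\<pi> int algebra_simps)
  also have "\<dots> \<le> measure_pmf.expectation P (\<lambda>\<omega>. f (X \<omega> - M \<omega>))"
  proof (intro integral_mono int)
    fix \<omega>
    show "f (X \<omega> - z (X \<omega>)) + \<beta> (X \<omega>) * (z (X \<omega>) - M \<omega>) \<le> f (X \<omega> - M \<omega>)"
      using subgradient_le[OF f, of "X \<omega> - z (X \<omega>)" "X \<omega> - M \<omega>"] by (simp add: \<beta>_def algebra_simps)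
  qed
  finally show ?thesis by (simp add: z_def)
qed

definition mixed_coupling ::
    "nat \<Rightarrow> (nat \<Rightarrow> real) \<Rightarrow> (nat \<Rightarrow> real) \<Rightarrow> (nat \<Rightarrow> nat) \<Rightarrow> real \<Rightarrow> (real \<times> real) pmf" where
  "mixed_coupling n x y \<sigma> \<delta> = map_pmf (\<lambda>(k, b). (x k, y (if b then \<sigma> k else k)))
     (pair_pmf (pmf_of_set {..<n}) (bernoulli_pmf \<delta>))"

lemma integral_mixed_coupling:
  assumes "0 < n" "0 \<le> \<delta>" "\<delta> \<le> 1"
  shows "measure_pmf.expectation (mixed_coupling n x y \<sigma> \<delta>) f
       = (\<Sum>k<n. (1 - \<delta>) * f (x k, y k) + \<delta> * f (x k, y (\<sigma> k))) / n"
proof -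
  have "{..<n} \<noteq> {}" using \<open>0 < n\<close> by auto
  define g where "g = (\<lambda>(k, b). (x k, y (if b then \<sigma> k else k)))"
  define P where "P = pair_pmf (pmf_of_set {..<n}) (bernoulli_pmf \<delta>)"
  have "measure_pmf.expectation (mixed_coupling n x y \<sigma> \<delta>) f
      = (\<Sum>p\<in>{..<n} \<times> UNIV. f (g p) * pmf P p)"
    unfolding mixed_coupling_def g_def[symmetric] P_def[symmetric] integral_map_pmf
    by (rule integral_measure_pmf_real) (use \<open>{..<n} \<noteq> {}\<close> in \<open>auto simp: P_def\<close>)
  also have "\<dots> = (\<Sum>k<n. \<Sum>b\<in>UNIV. f (g (k, b)) * (pmf (pmf_of_set {..<n}) k * pmf (bernoulli_pmf \<delta>) b))"
    by (simp add: sum.cartesian_product) (auto intro!: sum.cong simp: P_def pmf_pair)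
  also have "\<dots> = (\<Sum>k<n. ((1 - \<delta>) * f (x k, y k) + \<delta> * f (x k, y (\<sigma> k))) / n)"
    using assms \<open>{..<n} \<noteq> {}\<close> by (intro sum.cong) (auto simp: UNIV_bool g_def field_simps)
  finally show ?thesis by (simp add: sum_divide_distrib)
qed

lemma mixed_coupling_in_couplings:
  assumes \<sigma>: "\<sigma> permutes {..<n}" and "0 < n"
  shows "mixed_coupling n x y \<sigma> \<delta> \<in> couplings (empirical n x) (empirical n y)"
proof -
  define U where "U = pmf_of_set {..<n}"
  define B where "B = bernoulli_pmf \<delta>"
  define r where "r = (\<lambda>(k, b). if b then \<sigma> k else k)"
  have "map_pmf (\<lambda>k. r (k, b)) U = U" for b
  proof (cases b)
    case True
    have "{..<n} \<noteq> {}" using \<open>0 < n\<close> by auto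
    then show ?thesis
      using True map_pmf_of_set_inj[OF permutes_inj_on[OF \<sigma>]] permutes_image[OF \<sigma>]
      by (simp add: r_def U_def)
  qed (simp add: r_def)
  moreover have "map_pmf r (pair_pmf U B) = bind_pmf U (\<lambda>k. bind_pmf B (\<lambda>b. return_pmf (r (k, b))))"
    by (simp add: pair_pmf_def map_bind_pmf)
  moreover have "\<dots> = bind_pmf B (\<lambda>b. map_pmf (\<lambda>k. r (k, b)) U)"
    by (subst bind_commute_pmf) (simp add: map_pmf_def)
  ultimately have r: "map_pmf r (pair_pmf U B) = U"
    by simp
  have "map_pmf fst (mixed_coupling n x y \<sigma> \<delta>) = map_pmf x (map_pmf fst (pair_pmf U B))"
    by (simp add: mixed_coupling_def map_pmf_comp case_prod_unfold U_def B_def)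
  moreover have "map_pmf snd (mixed_coupling n x y \<sigma> \<delta>) = map_pmf y (map_pmf r (pair_pmf U B))"
    by (simp add: mixed_coupling_def map_pmf_comp case_prod_unfold U_def B_def r_def)
  ultimately show ?thesis
    by (simp add: couplings_def empirical_def r map_fst_pair_pmf flip: U_def)
qed

lemma cost_function_convex: "cost_function \<theta> \<Longrightarrow> convex_on UNIV \<theta>"
  by (simp add: cost_function_def)

lemma cost_function_abs: "cost_function \<theta> \<Longrightarrow> \<theta> \<bar>t\<bar> = \<theta> t"
  by (cases "0 \<le> t") (auto simp: cost_function_def)

lemma weak_cost_le:
  assumes "cost_function \<theta>" and "\<pi> \<in> couplings \<mu> \<nu>"
  shows "weak_cost \<theta> \<nu> \<mu> \<le> measure_pmf.expectation \<mu> (\<lambda>a. \<theta> \<bar>a - kernel_bary \<pi> a\<bar>)"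
  unfolding weak_cost_def
proof (rule cInf_lower)
  show "bdd_below ((\<lambda>\<pi>. measure_pmf.expectation \<mu> (\<lambda>a. \<theta> \<bar>a - kernel_bary \<pi> a\<bar>)) ` couplings \<mu> \<nu>)"
    using assms(1) by (intro bdd_belowI[where m = 0]) (auto simp: cost_function_def)
qed (use assms(2) in blast)

lemma weak_integral_mixed_coupling_le:
  assumes \<theta>: "cost_function \<theta>" and \<sigma>: "\<sigma> permutes {..<n}" and "0 < n" "0 \<le> \<delta>" "\<delta> \<le> 1"
  shows "measure_pmf.expectation (empirical n x) (\<lambda>a. \<theta> \<bar>a - kernel_bary (mixed_coupling n x y \<sigma> \<delta>) a\<bar>)
       \<le> (\<Sum>k<n. \<theta> (x k - ((1 - \<delta>) * y k + \<delta> * y (\<sigma> k)))) / n"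
proof -
  define \<pi> where "\<pi> = mixed_coupling n x y \<sigma> \<delta>"
  define M where "M k = (1 - \<delta>) * y k + \<delta> * y (\<sigma> k)" for k
  have \<pi>: "\<pi> \<in> couplings (empirical n x) (empirical n y)"
    unfolding \<pi>_def using \<sigma> \<open>0 < n\<close> by (rule mixed_coupling_in_couplings)
  then have fst_\<pi>: "map_pmf fst \<pi> = empirical n x"
    by (simp add: couplings_def)
  have ne: "{..<n} \<noteq> {}" using \<open>0 < n\<close> by auto
  have "measure_pmf.expectation (empirical n x) (\<lambda>a. \<theta> \<bar>a - kernel_bary \<pi> a\<bar>)
      = measure_pmf.expectation (map_pmf fst \<pi>) (\<lambda>a. \<theta> (a - kernel_bary \<pi> a))"
    by (simp only: fst_\<pi> cost_function_abs[OF \<theta>])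
  also have "measure_pmf.expectation (map_pmf fst \<pi>) (\<lambda>a. \<theta> (a - kernel_bary \<pi> a))
      \<le> measure_pmf.expectation (pmf_of_set {..<n}) (\<lambda>k. \<theta> (x k - M k))"
  proof (rule integral_convex_kernel_bary_le[OF cost_function_convex[OF \<theta>]])
    show "finite (set_pmf \<pi>)" using \<pi> \<open>0 < n\<close> by (rule finite_set_pmf_coupling_empirical)
    show "finite (set_pmf (pmf_of_set {..<n}))" using ne by simp
    show "measure_pmf.expectation \<pi> (\<lambda>p. \<beta> (fst p) * snd p)
        = measure_pmf.expectation (pmf_of_set {..<n}) (\<lambda>k. \<beta> (x k) * M k)" for \<beta>
      using ne assms(3-5)
      by (simp add: \<pi>_def M_def integral_mixed_coupling integral_pmf_of_set algebra_simps sum.distrib)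
  qed (simp add: fst_\<pi> empirical_def)
  also have "\<dots> = (\<Sum>k<n. \<theta> (x k - M k)) / n"
    using ne by (simp add: integral_pmf_of_set)
  finally show ?thesis by (simp add: \<pi>_def M_def)
qed

lemma strictly_convex_midpoint:
  assumes "strictly_convex f" and "a \<noteq> b"
  shows "f ((a + b) / 2) < (f a + f b) / 2"
proof -
  have "f ((1 - 1/2) * a + 1/2 * b) < (1 - 1/2) * f a + 1/2 * f b"
    using assms unfolding strictly_convex_def by (metis field_sum_of_halves half_gt_zero_iff zero_less_one less_add_same_cancel1)
  then show ?thesis by (simp add: add_divide_distrib)
qed

context
  fixes n :: nat and x y :: "nat \<Rightarrow> real" and \<theta> :: "real \<Rightarrow> real"
  assumes n_pos: "0 < n"
    and x_mono: "\<And>i j. i \<le> j \<Longrightarrow> j < n \<Longrightarrow> x i \<le> x j"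
    and y_mono: "\<And>i j. i \<le> j \<Longrightarrow> j < n \<Longrightarrow> y i \<le> y j"
    and \<theta>: "cost_function \<theta>"
begin

lemma diagonal_coupling: "mixed_coupling n x y id 0 \<in> couplings (empirical n x) (empirical n y)"
  using permutes_id n_pos by (rule mixed_coupling_in_couplings)

lemma transport_cost_sorted:
  "transport_cost \<theta> (empirical n y) (empirical n x) = (\<Sum>k<n. \<theta> (x k - y k)) / n"
proof -
  define cost where "cost \<pi> = measure_pmf.expectation \<pi> (\<lambda>(a, b). \<theta> \<bar>a - b\<bar>)" for \<pi>
  have lower: "(\<Sum>k<n. \<theta> (x k - y k)) / n \<le> cost \<pi>"
    if "\<pi> \<in> couplings (empirical n x) (empirical n y)" for \<pi>
    using coupling_empirical_Monge_bound[OF that n_pos, of "\<lambda>a b. \<theta> \<bar>a - b\<bar>"]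
      convex_on_Monge[OF cost_function_convex[OF \<theta>]] x_mono y_mono
    by (simp add: cost_def cost_function_abs[OF \<theta>])
  have diagonal: "cost (mixed_coupling n x y id 0) = (\<Sum>k<n. \<theta> (x k - y k)) / n"
    using n_pos by (simp add: cost_def integral_mixed_coupling cost_function_abs[OF \<theta>])
  have "Inf (cost ` couplings (empirical n x) (empirical n y)) = (\<Sum>k<n. \<theta> (x k - y k)) / n"
  proof (rule antisym)
    show "Inf (cost ` couplings (empirical n x) (empirical n y)) \<le> (\<Sum>k<n. \<theta> (x k - y k)) / n"
      unfolding diagonal[symmetric] using diagonal_coupling lower
      by (intro cInf_lower bdd_belowI[where m = "(\<Sum>k<n. \<theta> (x k - y k)) / n"]) auto
    show "(\<Sum>k<n. \<theta> (x k - y k)) / n \<le> Inf (cost ` couplings (empirical n x) (empirical n y))"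
      using diagonal_coupling lower by (intro cInf_greatest) auto
  qed
  then show ?thesis by (simp add: transport_cost_def cost_def[abs_def])
qed

lemma weak_cost_le_sorted:
  "weak_cost \<theta> (empirical n y) (empirical n x) \<le> (\<Sum>k<n. \<theta> (x k - y k)) / n"
  using weak_cost_le[OF \<theta> diagonal_coupling] weak_integral_mixed_coupling_le[OF \<theta> permutes_id n_pos, of 0 x y]
  by simp

lemma weak_integral_lower_bound_sorted:
  assumes diff_mono: "\<And>i j. i \<le> j \<Longrightarrow> j < n \<Longrightarrow> x i - y i \<le> x j - y j"
    and \<pi>: "\<pi> \<in> couplings (empirical n x) (empirical n y)"
  shows "(\<Sum>k<n. \<theta> (x k - y k)) / n \<le> measure_pmf.expectation (empirical n x) (\<lambda>a. \<theta> \<bar>a - kernel_bary \<pi> a\<bar>)"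
proof -
  \<comment> \<open>By monotonicity of \<open>x k - y k\<close>, equal points \<open>x k\<close> have equal partners \<open>y k\<close>,
    so the choice in \<open>D\<close> is immaterial.\<close>
  define D where "D a = a - y (SOME k. k < n \<and> x k = a)" for a
  have D: "D (x j) = x j - y j" if "j < n" for j
  proof -
    define k where "k = (SOME k. k < n \<and> x k = x j)"
    have k: "k < n" "x k = x j"
      using someI[of "\<lambda>k. k < n \<and> x k = x j" j] that unfolding k_def by auto
    have "y k = y j"
    proof (cases "k \<le> j")
      case True
      then have "x k - y k \<le> x j - y j" "y k \<le> y j" using diff_mono y_mono that by blast+
      then show ?thesis using k(2) by linarith
    next
      case False
      then have "x j - y j \<le> x k - y k" "y j \<le> y k" using diff_mono y_mono k(1) by simp_all
      then show ?thesis using k(2) by linarith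
    qed
    then show ?thesis by (simp add: D_def flip: k_def)
  qed
  define \<beta> where "\<beta> a = subgradient \<theta> (D a)" for a
  define \<alpha> where "\<alpha> a = \<theta> (D a) + \<beta> a * (a - D a)" for a
  have \<beta>_mono: "\<beta> (x j) \<le> \<beta> (x j')" if "j \<le> j'" "j' < n" for j j'
    using subgradient_mono[OF cost_function_convex[OF \<theta>] diff_mono[OF that]] that
    by (simp add: \<beta>_def D)
  have "(\<Sum>k<n. \<theta> (x k - y k)) = (\<Sum>k<n. \<alpha> (x k) - \<beta> (x k) * y k)"
    by (rule sum.cong) (simp_all add: \<alpha>_def D algebra_simps)
  then have "(\<Sum>k<n. \<theta> (x k - y k)) / n \<le> measure_pmf.expectation \<pi> (\<lambda>(a, b). \<alpha> a - \<beta> a * b)"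
  proof (simp only:, intro coupling_empirical_Monge_bound[OF \<pi> n_pos])
    fix j j' k k' assume "j \<le> j'" "j' < n" "k \<le> k'" "k' < n"
    then have "\<beta> (x j) \<le> \<beta> (x j')" "y k \<le> y k'" using \<beta>_mono y_mono by blast+
    then have "0 \<le> (\<beta> (x j') - \<beta> (x j)) * (y k' - y k)" by simp
    then show "\<alpha> (x j) - \<beta> (x j) * y k + (\<alpha> (x j') - \<beta> (x j') * y k')
        \<le> \<alpha> (x j) - \<beta> (x j) * y k' + (\<alpha> (x j') - \<beta> (x j') * y k)"
      by (simp add: algebra_simps)
  qed
  also have "\<dots> \<le> measure_pmf.expectation (map_pmf fst \<pi>) (\<lambda>a. \<theta> \<bar>a - kernel_bary \<pi> a\<bar>)"
    unfolding case_prod_unfold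
  proof (rule affine_minorant_le_integral_kernel_bary)
    show "finite (set_pmf \<pi>)" using \<pi> n_pos by (rule finite_set_pmf_coupling_empirical)
    show "\<alpha> a - \<beta> a * z \<le> \<theta> \<bar>a - z\<bar>" for a z
    proof -
      have "\<alpha> a - \<beta> a * z = \<theta> (D a) + \<beta> a * ((a - z) - D a)"
        by (simp add: \<alpha>_def algebra_simps)
      also have "\<dots> \<le> \<theta> (a - z)"
        unfolding \<beta>_def by (rule subgradient_le[OF cost_function_convex[OF \<theta>]])
      finally show ?thesis by (simp only: cost_function_abs[OF \<theta>])
    qed
  qed
  finally show ?thesis
    using \<pi> by (simp only: couplings_def mem_Collect_eq)
qed

lemma weak_cost_sorted_eq:
  assumes "\<And>i j. i \<le> j \<Longrightarrow> j < n \<Longrightarrow> x i - y i \<le> x j - y j"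
  shows "weak_cost \<theta> (empirical n y) (empirical n x) = (\<Sum>k<n. \<theta> (x k - y k)) / n"
proof (rule antisym[OF weak_cost_le_sorted])
  show "(\<Sum>k<n. \<theta> (x k - y k)) / n \<le> weak_cost \<theta> (empirical n y) (empirical n x)"
    unfolding weak_cost_def
    using diagonal_coupling weak_integral_lower_bound_sorted[OF assms] by (intro cInf_greatest) auto
qed

lemma weak_cost_less_sorted:
  assumes \<theta>_strict: "strictly_convex \<theta>" and "i \<le> j" "j < n" and descent: "x j - y j < x i - y i"
  shows "weak_cost \<theta> (empirical n y) (empirical n x) < (\<Sum>k<n. \<theta> (x k - y k)) / n"
proof -
  define d where "d k = x k - y k" for k
  define gap where "gap = y j - y i"
  \<comment> \<open>Move mass \<open>\<delta>\<close> between \<open>y i\<close> and \<open>y j\<close> so that both conditional means sit at the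
    same displacement \<open>(d i + d j) / 2\<close>.\<close>
  define \<delta> where "\<delta> = (d i - d j) / (2 * gap)"
  define \<sigma> where "\<sigma> = Transposition.transpose i j"
  define m where "m k = (1 - \<delta>) * y k + \<delta> * y (\<sigma> k)" for k
  have "i < j" using \<open>i \<le> j\<close> descent by (cases "i = j") auto
  have "x i \<le> x j" using x_mono \<open>i \<le> j\<close> \<open>j < n\<close> .
  then have "0 < gap" "d i - d j \<le> gap" using descent by (auto simp: gap_def d_def)
  then have \<delta>: "0 \<le> \<delta>" "\<delta> \<le> 1" "\<delta> * gap = (d i - d j) / 2"
    using descent by (auto simp: \<delta>_def d_def field_simps)
  have \<sigma>: "\<sigma> permutes {..<n}"
    unfolding \<sigma>_def using \<open>i < j\<close> \<open>j < n\<close> by (intro permutes_swap_id) auto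
  have "m i = y i + \<delta> * gap" "m j = y j - \<delta> * gap"
    by (simp_all add: m_def \<sigma>_def gap_def algebra_simps)
  then have mid_i: "x i - m i = (d i + d j) / 2" and mid_j: "x j - m j = (d i + d j) / 2"
    using \<delta>(3) unfolding d_def by (auto simp: field_simps)
  define F where "F k = \<theta> (x k - m k) - \<theta> (d k)" for k
  have "F k = 0" if "k \<noteq> i" "k \<noteq> j" for k
    using that by (simp add: F_def m_def \<sigma>_def d_def algebra_simps)
  then have "(\<Sum>k<n. F k) = (\<Sum>k\<in>{i, j}. F k)"
    using \<open>i < j\<close> \<open>j < n\<close> by (intro sum.mono_neutral_right) auto
  also have "\<dots> = 2 * \<theta> ((d i + d j) / 2) - \<theta> (d i) - \<theta> (d j)"
    using \<open>i < j\<close> by (simp add: F_def mid_i mid_j)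
  also have "\<dots> < 0"
    using strictly_convex_midpoint[OF \<theta>_strict, of "d i" "d j"] descent by (simp add: d_def)
  finally have "(\<Sum>k<n. \<theta> (x k - m k)) < (\<Sum>k<n. \<theta> (x k - y k))"
    by (simp add: F_def d_def sum_subtractf)
  have "weak_cost \<theta> (empirical n y) (empirical n x) \<le> (\<Sum>k<n. \<theta> (x k - m k)) / n"
    unfolding m_def
    by (rule order.trans[OF weak_cost_le[OF \<theta> mixed_coupling_in_couplings[OF \<sigma> n_pos]]
          weak_integral_mixed_coupling_le[OF \<theta> \<sigma> n_pos \<delta>(1,2)]])
  also have "\<dots> < (\<Sum>k<n. \<theta> (x k - y k)) / n"
    using \<open>(\<Sum>k<n. \<theta> (x k - m k)) < _\<close> n_pos by (simp add: divide_strict_right_mono)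
  finally show ?thesis .
qed

end

theorem theorem2p7:
  fixes n :: nat and x y :: "nat \<Rightarrow> real" and \<theta> :: "real \<Rightarrow> real"
  assumes "n \<ge> 1"
    and "\<And>i j. i \<le> j \<Longrightarrow> j < n \<Longrightarrow> x i \<le> x j"
    and "\<And>i j. i \<le> j \<Longrightarrow> j < n \<Longrightarrow> y i \<le> y j"
    and "cost_function \<theta>" and "strictly_convex \<theta>"
  shows "(\<forall>i j. i \<le> j \<longrightarrow> j < n \<longrightarrow> x i - y i \<le> x j - y j) \<longleftrightarrow>
         weak_cost \<theta> (empirical n y) (empirical n x) = transport_cost \<theta> (empirical n y) (empirical n x)"
proof -
  have n: "0 < n" using assms(1) by simp
  note sorted = n assms(2-4)
  show ?thesis
  proof
    assume "\<forall>i j. i \<le> j \<longrightarrow> j < n \<longrightarrow> x i - y i \<le> x j - y j"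
    then show "weak_cost \<theta> (empirical n y) (empirical n x) = transport_cost \<theta> (empirical n y) (empirical n x)"
      by (simp add: weak_cost_sorted_eq[OF sorted] transport_cost_sorted[OF sorted])
  next
    assume eq: "weak_cost \<theta> (empirical n y) (empirical n x) = transport_cost \<theta> (empirical n y) (empirical n x)"
    show "\<forall>i j. i \<le> j \<longrightarrow> j < n \<longrightarrow> x i - y i \<le> x j - y j"
    proof (rule ccontr)
      assume "\<not> ?thesis"
      then obtain i j where "i \<le> j" "j < n" "x j - y j < x i - y i" by (auto simp: not_le)
      from weak_cost_less_sorted[OF sorted assms(5) this] eq show False
        by (simp add: transport_cost_sorted[OF sorted])
    qed
  qed
qed

end
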